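(* Let $K\ge1$, $A=\{1,\dots,K\}$, let $d\ge1$ be an integer and $\eta>0$ with $\eta\le \frac{1}{Ke(d+1)}$. Consider the exponentially weighted update: $w_1(i)=1$, $W_t=\sum_{j\in A}w_t(j)$, $p_t(i)=w_t(i)/W_t$, $w_{t+1}(i)=p_t(i)\exp(-\eta\widehat{\ell}_t(i))$, where the loss estimates have the form $$\widehat{\ell}_t(i)=\begin{cases}\dfrac{\ell_{t-d}(i)}{q_{t-d}(i)}\,B_{t-d}(i) & \text{if } t>d,\\[2mm] 0&\text{otherwise,}\end{cases}$$ with $\ell_s(i)\in[0,1]$, $B_s(i)\in\{0,1\}$, and $q_s(i)$ numbers satisfying $q_s(i)\ge p_s(i)>0$ for all $s\ge1$, $i\in A$. Then for all $t\ge1$ and all $i\in A$, $$p_{t+1}(i)\le\Bigl(1+\frac1d\Bigr)p_t(i).$$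
   Context: The statement holds deterministically, for every realization of the $\ell_s,B_s,q_s$ satisfying the stated conditions. *)

theory Defs
  imports Complex_Main
begin

definition lhat :: "nat \<Rightarrow> (nat \<Rightarrow> nat \<Rightarrow> real) \<Rightarrow> (nat \<Rightarrow> nat \<Rightarrow> real)
    \<Rightarrow> (nat \<Rightarrow> nat \<Rightarrow> real) \<Rightarrow> nat \<Rightarrow> nat \<Rightarrow> real" where
  "lhat d l B q t i = (if t > d then l (t - d) i / q (t - d) i * B (t - d) i else 0)"

text \<open>Weights w_t(i), with w_1(i) = 1 and
  w_{t+1}(i) = p_t(i) * exp(-eta * lhat_t(i)), p_t(i) = w_t(i) / sum_{j in A} w_t(j).
  The value at t = 0 is an unused dummy.\<close>
primrec ew_w :: "nat \<Rightarrow> nat \<Rightarrow> real \<Rightarrow> (nat \<Rightarrow> nat \<Rightarrow> real) \<Rightarrow> (nat \<Rightarrow> nat \<Rightarrow> real)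
    \<Rightarrow> (nat \<Rightarrow> nat \<Rightarrow> real) \<Rightarrow> nat \<Rightarrow> nat \<Rightarrow> real" where
  "ew_w K d \<eta> l B q 0 = (\<lambda>i. 1)"
| "ew_w K d \<eta> l B q (Suc t) =
     (if t = 0 then (\<lambda>i. 1)
      else (\<lambda>i. ew_w K d \<eta> l B q t i / (\<Sum>j\<in>{1..K}. ew_w K d \<eta> l B q t j)
                 * exp (- \<eta> * lhat d l B q t i)))"

definition ew_p :: "nat \<Rightarrow> nat \<Rightarrow> real \<Rightarrow> (nat \<Rightarrow> nat \<Rightarrow> real) \<Rightarrow> (nat \<Rightarrow> nat \<Rightarrow> real)
    \<Rightarrow> (nat \<Rightarrow> nat \<Rightarrow> real) \<Rightarrow> nat \<Rightarrow> nat \<Rightarrow> real" where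
  "ew_p K d \<eta> l B q t i = ew_w K d \<eta> l B q t i / (\<Sum>j\<in>{1..K}. ew_w K d \<eta> l B q t j)"

end

theory Submission
  imports Defs
begin

text \<open>The update divides \<open>p\<^sub>t(i) exp(-\<eta> \<ell>\<^sub>t(i)) \<le> p\<^sub>t(i)\<close>
  by the normaliser \<open>\<Sum>\<^sub>j p\<^sub>t(j) exp(-\<eta> \<ell>\<^sub>t(j)) \<ge> 1 - \<eta> \<Sum>\<^sub>j p\<^sub>t(j) \<ell>\<^sub>t(j)\<close>, so it suffices
  that the expected estimated loss is at most \<open>K e\<close>. The estimate \<open>\<ell>\<^sub>t(j)\<close> is at most
  \<open>1 / p\<^sub>t\<^sub>-\<^sub>d(j)\<close>, and by the induction hypothesis over the \<open>d\<close> intermediate rounds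
  \<open>p\<^sub>t(j) \<le> (1 + 1/d)\<^sup>d p\<^sub>t\<^sub>-\<^sub>d(j) \<le> e p\<^sub>t\<^sub>-\<^sub>d(j)\<close>; hence each summand is at most \<open>e\<close> and the
  normaliser is at least \<open>1 - 1/(d+1)\<close>.\<close>

lemma one_plus_inverse_power_le_exp_1: "(1 + 1 / real d) ^ d \<le> exp 1"
proof (cases "d = 0")
  case False
  have "(1 + 1 / real d) ^ d \<le> exp (1 / real d) ^ d"
    by (intro power_mono) (simp_all add: exp_ge_add_one_self add.commute)
  also have "\<dots> = exp 1"
    using False by (simp add: exp_of_nat_mult[symmetric])
  finally show ?thesis .
qed simp

lemma sum_mult_exp_ge:
  fixes p x :: "'a \<Rightarrow> real"
  assumes "\<And>j. j \<in> A \<Longrightarrow> 0 \<le> p j"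
  shows "(\<Sum>j\<in>A. p j * exp (- x j)) \<ge> sum p A - (\<Sum>j\<in>A. p j * x j)"
proof -
  have "(\<Sum>j\<in>A. p j * (1 - x j)) \<le> (\<Sum>j\<in>A. p j * exp (- x j))"
    using assms exp_ge_add_one_self[of "- x _"] by (intro sum_mono mult_left_mono) auto
  then show ?thesis
    by (simp add: algebra_simps sum_subtractf)
qed

lemma exp_reweight_le:
  fixes p x :: "'a \<Rightarrow> real"
  assumes "\<And>j. j \<in> A \<Longrightarrow> 0 \<le> p j" and "sum p A = 1"
    and "\<And>j. j \<in> A \<Longrightarrow> 0 \<le> x j" and "(\<Sum>j\<in>A. p j * x j) \<le> \<epsilon>" and "\<epsilon> < 1"
    and "i \<in> A"
  shows "p i * exp (- x i) / (\<Sum>j\<in>A. p j * exp (- x j)) \<le> p i / (1 - \<epsilon>)"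
proof -
  have normaliser: "1 - \<epsilon> \<le> (\<Sum>j\<in>A. p j * exp (- x j))"
    using sum_mult_exp_ge[of A p x, OF assms(1)] assms(2,4) by linarith
  have "p i * exp (- x i) \<le> p i"
    using assms(1,3,6) by (simp add: mult_left_le)
  then have "p i * exp (- x i) / (\<Sum>j\<in>A. p j * exp (- x j)) \<le> p i / (\<Sum>j\<in>A. p j * exp (- x j))"
    using normaliser assms(5) by (intro divide_right_mono) auto
  also have "\<dots> \<le> p i / (1 - \<epsilon>)"
    using normaliser assms(1,5,6) by (intro divide_left_mono) auto
  finally show ?thesis .
qed

lemma growth_le_power:
  fixes f :: "nat \<Rightarrow> real"
  assumes "0 \<le> c" and "\<And>s. a \<le> s \<Longrightarrow> s < a + m \<Longrightarrow> f (Suc s) \<le> c * f s"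
  shows "f (a + m) \<le> c ^ m * f a"
  using assms(2)
proof (induction m)
  case (Suc m)
  have "f (a + Suc m) \<le> c * f (a + m)"
    using Suc.prems by simp
  also have "\<dots> \<le> c * (c ^ m * f a)"
    using Suc by (intro mult_left_mono) (simp_all add: assms(1))
  finally show ?case
    by simp
qed simp

lemma importance_weighted_le:
  fixes l b p q :: real
  assumes "l \<le> 1" and "b \<in> {0, 1}" and "0 < p" and "p \<le> q"
  shows "l / q * b \<le> 1 / p"
proof -
  have "l / q * b \<le> 1 / q"
    using assms by (auto simp: divide_right_mono)
  also have "\<dots> \<le> 1 / p"
    using assms by (simp add: frac_le)
  finally show ?thesis .
qed

lemma sum_ew_p_eq_1:
  assumes "ew_p K d \<eta> l B q t i > 0"
  shows "(\<Sum>j\<in>{1..K}. ew_p K d \<eta> l B q t j) = 1"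
proof -
  have "(\<Sum>j\<in>{1..K}. ew_w K d \<eta> l B q t j) \<noteq> 0"
    using assms by (auto simp: ew_p_def)
  then show ?thesis
    by (simp add: ew_p_def flip: sum_divide_distrib)
qed

lemma ew_p_Suc:
  assumes "t \<ge> 1"
  shows "ew_p K d \<eta> l B q (Suc t) i = ew_p K d \<eta> l B q t i * exp (- \<eta> * lhat d l B q t i) /
     (\<Sum>j\<in>{1..K}. ew_p K d \<eta> l B q t j * exp (- \<eta> * lhat d l B q t j))"
  using assms by (simp add: ew_p_def)

locale delayed_exp_weights =
  fixes K d :: nat and \<eta> :: real and l B q :: "nat \<Rightarrow> nat \<Rightarrow> real"
  assumes K_ge_1: "K \<ge> 1" and d_ge_1: "d \<ge> 1" and eta_pos: "\<eta> > 0"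
    and eta_le: "\<eta> \<le> 1 / (real K * exp 1 * (real d + 1))"
    and loss_range: "\<And>s i. s \<ge> 1 \<Longrightarrow> i \<in> {1..K} \<Longrightarrow> 0 \<le> l s i \<and> l s i \<le> 1"
    and B_range: "\<And>s i. s \<ge> 1 \<Longrightarrow> i \<in> {1..K} \<Longrightarrow> B s i \<in> {0, 1}"
    and q_ge_p: "\<And>s i. s \<ge> 1 \<Longrightarrow> i \<in> {1..K} \<Longrightarrow>
           q s i \<ge> ew_p K d \<eta> l B q s i \<and> ew_p K d \<eta> l B q s i > 0"
begin

abbreviation p :: "nat \<Rightarrow> nat \<Rightarrow> real" where
  "p \<equiv> ew_p K d \<eta> l B q"

abbreviation L :: "nat \<Rightarrow> nat \<Rightarrow> real" where
  "L \<equiv> lhat d l B q"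

lemma p_pos: "s \<ge> 1 \<Longrightarrow> i \<in> {1..K} \<Longrightarrow> p s i > 0"
  using q_ge_p by blast

lemma sum_p: "s \<ge> 1 \<Longrightarrow> (\<Sum>j\<in>{1..K}. p s j) = 1"
  using sum_ew_p_eq_1 p_pos[of s 1] K_ge_1 by simp

lemma lhat_nonneg:
  assumes "i \<in> {1..K}"
  shows "0 \<le> L t i"
proof (cases "t > d")
  case True
  then have "t - d \<ge> 1"
    by simp
  with assms show ?thesis
    using True loss_range q_ge_p[of "t - d" i] B_range[of "t - d" i]
    by (auto simp: lhat_def)
qed (simp add: lhat_def)

lemma lhat_le_inverse:
  assumes "t > d" and "i \<in> {1..K}"
  shows "L t i \<le> 1 / p (t - d) i"
proof -
  have "t - d \<ge> 1"
    using assms(1) by simp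
  then show ?thesis
    using assms importance_weighted_le loss_range B_range q_ge_p by (simp add: lhat_def)
qed

lemma expected_lhat_le:
  assumes "\<And>s i. 1 \<le> s \<Longrightarrow> s < t \<Longrightarrow> i \<in> {1..K} \<Longrightarrow> p (Suc s) i \<le> (1 + 1 / real d) * p s i"
  shows "(\<Sum>j\<in>{1..K}. p t j * L t j) \<le> real K * exp 1"
proof (cases "t > d")
  case True
  have "p t j * L t j \<le> exp 1" if j: "j \<in> {1..K}" for j
  proof -
    have s: "t - d \<ge> 1"
      using True by simp
    have "p t j \<le> (1 + 1 / real d) ^ d * p (t - d) j"
      using growth_le_power[of "1 + 1 / real d" "t - d" d "\<lambda>s. p s j"] assms j True by simp
    also have "\<dots> \<le> exp 1 * p (t - d) j"
      using p_pos[OF s j] one_plus_inverse_power_le_exp_1 by (intro mult_right_mono) auto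
    finally have growth: "p t j \<le> exp 1 * p (t - d) j" .
    have "p t j * L t j \<le> p t j * (1 / p (t - d) j)"
      using lhat_le_inverse[OF True j] p_pos[of t j] j True d_ge_1 by (intro mult_left_mono) auto
    also have "\<dots> \<le> exp 1"
      using growth p_pos[OF s j] by (simp add: divide_le_eq)
    finally show ?thesis .
  qed
  then show ?thesis
    using sum_mono[of "{1..K}" "\<lambda>j. p t j * L t j" "\<lambda>_. exp 1"] by simp
qed (simp add: lhat_def)

lemma p_Suc_le:
  assumes "t \<ge> 1" and "i \<in> {1..K}"
  shows "p (Suc t) i \<le> (1 + 1 / real d) * p t i"
  using assms
proof (induction t arbitrary: i rule: less_induct)
  case (less t)
  have "(\<Sum>j\<in>{1..K}. p t j * (\<eta> * L t j)) = \<eta> * (\<Sum>j\<in>{1..K}. p t j * L t j)"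
    by (simp add: sum_distrib_left algebra_simps)
  also have "\<dots> \<le> \<eta> * (real K * exp 1)"
    using expected_lhat_le less.IH eta_pos by (intro mult_left_mono) auto
  also have "\<dots> \<le> 1 / (real K * exp 1 * (real d + 1)) * (real K * exp 1)"
    using eta_le by (intro mult_right_mono) auto
  also have "\<dots> = 1 / (real d + 1)"
    using K_ge_1 by simp
  finally have expected_loss: "(\<Sum>j\<in>{1..K}. p t j * (\<eta> * L t j)) \<le> 1 / (real d + 1)" .
  have "p (Suc t) i = p t i * exp (- (\<eta> * L t i)) / (\<Sum>j\<in>{1..K}. p t j * exp (- (\<eta> * L t j)))"
    using ew_p_Suc[OF less.prems(1)] by simp
  also have "\<dots> \<le> p t i / (1 - 1 / (real d + 1))"
    using less.prems p_pos sum_p lhat_nonneg eta_pos expected_loss d_ge_1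
    by (intro exp_reweight_le) (auto simp: less_imp_le)
  also have "\<dots> = (1 + 1 / real d) * p t i"
    using d_ge_1 by (simp add: field_simps)
  finally show ?case .
qed

end

theorem lemma2:
  fixes K d :: nat and \<eta> :: real and l B q :: "nat \<Rightarrow> nat \<Rightarrow> real"
  assumes "K \<ge> 1" and "d \<ge> 1" and "\<eta> > 0"
    and "\<eta> \<le> 1 / (real K * exp 1 * (real d + 1))"
    and "\<And>s i. s \<ge> 1 \<Longrightarrow> i \<in> {1..K} \<Longrightarrow> 0 \<le> l s i \<and> l s i \<le> 1"
    and "\<And>s i. s \<ge> 1 \<Longrightarrow> i \<in> {1..K} \<Longrightarrow> B s i \<in> {0, 1}"
    and "\<And>s i. s \<ge> 1 \<Longrightarrow> i \<in> {1..K} \<Longrightarrow>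
           q s i \<ge> ew_p K d \<eta> l B q s i \<and> ew_p K d \<eta> l B q s i > 0"
  shows "\<forall>t\<ge>1. \<forall>i\<in>{1..K}.
           ew_p K d \<eta> l B q (t + 1) i \<le> (1 + 1 / real d) * ew_p K d \<eta> l B q t i"
proof -
  interpret delayed_exp_weights K d \<eta> l B q
    using assms by unfold_locales
  show ?thesis
    using p_Suc_le by simp
qed

end
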